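(* The linear operator $\widetilde{\mathcal{V}}:\mathbb{R}^{p\times q}\to\mathbb{R}^{p\times q}$ defined by $$\widetilde{\mathcal{V}}:=\mathcal{I}+\sigma\mathcal{G}+\sigma\mathcal{A}^*_{\mathcal{J}_1}\mathcal{A}_{\mathcal{J}_1}-\sigma^2(\sigma|\mathcal{J}_1|+\rho)^{-1}\mathcal{A}^*_{\mathcal{J}_1}y_{\mathcal{J}_1}y^\top_{\mathcal{J}_1}\mathcal{A}_{\mathcal{J}_1}$$ (where the last two terms are absent if $\mathcal{J}_1=\emptyset$) is self-adjoint and positive definite.
   Context: Data: $X_1,\dots,X_n\in\mathbb{R}^{p\times q}$, $y=(y_1,\dots,y_n)^\top\in\{-1,+1\}^n$, $C>0$, $\tau>0$. $\mathcal{A}W=(\langle y_1X_1,W\rangle,\dots,\langle y_nX_n,W\rangle)^\top$ with $\langle X,Y\rangle=\operatorname{tr}(X^\top Y)$. For $\mathcal{I}'\subseteq\{1,\dots,n\}$, $\mathcal{A}_{\mathcal{I}'}W:=(\mathcal{A}W)_{\mathcal{I}'}$ (the subvector indexed by $\mathcal{I}'$) and $\mathcal{A}^*_{\mathcal{I}'}z:=\sum_{j\in\mathcal{I}'}z_jy_jX_j$; $y_{\mathcal{I}'}$ is the corresponding subvector of $y$. $S=[0,C]^n$, $\mathbb{B}_2^\tau=\{X:\|X\|_2\le\tau\}$ (spectral norm). Fix $\lambda^k\in\mathbb{R}^n$, $\Lambda^k\in\mathbb{R}^{p\times q}$, $\sigma>0$, $\rho\ge0$, and $(\widetilde{W},\widetilde{b})\in\mathbb{R}^{p\times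 q}\times\mathbb{R}$; let $\omega:=-\lambda^k-\sigma(\mathcal{A}\widetilde{W}+\widetilde{b}y-e_n)$ ($e_n$ the all-ones vector) and $\mathcal{J}_1:=\{j: 0<\omega_j<C\}$. $\mathcal{I}$ is the identity on $\mathbb{R}^{p\times q}$ and $\mathcal{G}$ is any element of the Clarke generalized Jacobian $\partial\Pi_{\mathbb{B}_2^\tau}(\Lambda^k+\sigma\widetilde{W})$ of the metric projection onto $\mathbb{B}_2^\tau$. Self-adjointness/positive definiteness are with respect to the trace inner product. *)

theory Defs
  imports "HOL-Analysis.Analysis"
begin

text \<open>p x q real matrices are modelled as real^'q^'p; the inner product of this type
  is sum_ij X_ij Y_ij = tr(X^T Y), and its norm is the Frobenius norm.\<close>

definition spec_norm :: "real^'q^'p \<Rightarrow> real" where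
  "spec_norm X = onorm (\<lambda>v. X *v v)"

definition spec_ball :: "real \<Rightarrow> (real^'q^'p) set" where
  "spec_ball \<tau> = {X. spec_norm X \<le> \<tau>}"

definition proj_spec_ball :: "real \<Rightarrow> real^'q^'p \<Rightarrow> real^'q^'p" where
  "proj_spec_ball \<tau> X = closest_point (spec_ball \<tau>) X"

definition B_jac :: "('a::euclidean_space \<Rightarrow> 'b::euclidean_space) \<Rightarrow> 'a \<Rightarrow> ('a \<Rightarrow>\<^sub>L 'b) set" where
  "B_jac F x = {L. \<exists>s D. (\<forall>k. (F has_derivative blinfun_apply (D k)) (at (s k)))
                        \<and> s \<longlonglongrightarrow> x \<and> D \<longlonglongrightarrow> L}"

definition clarke_jac :: "('a::euclidean_space \<Rightarrow> 'b::euclidean_space) \<Rightarrow> 'a \<Rightarrow> ('a \<Rightarrow>\<^sub>L 'b) set" where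
  "clarke_jac F x = convex hull (B_jac F x)"

text \<open>A W = (<y_i X_i, W>)_i ; indices are 0..n-1.\<close>
definition omega_vec :: "nat \<Rightarrow> (nat \<Rightarrow> real^'q^'p) \<Rightarrow> (nat \<Rightarrow> real) \<Rightarrow> (nat \<Rightarrow> real) \<Rightarrow> real
     \<Rightarrow> real^'q^'p \<Rightarrow> real \<Rightarrow> nat \<Rightarrow> real" where
  "omega_vec n X y lam \<sigma> Wt bt j = - lam j - \<sigma> * (((y j *\<^sub>R X j) \<bullet> Wt) + bt * y j - 1)"

definition J1_set :: "nat \<Rightarrow> (nat \<Rightarrow> real^'q^'p) \<Rightarrow> (nat \<Rightarrow> real) \<Rightarrow> real \<Rightarrow> (nat \<Rightarrow> real) \<Rightarrow> real
     \<Rightarrow> real^'q^'p \<Rightarrow> real \<Rightarrow> nat set" where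
  "J1_set n X y C lam \<sigma> Wt bt =
     {j \<in> {..<n}. 0 < omega_vec n X y lam \<sigma> Wt bt j \<and> omega_vec n X y lam \<sigma> Wt bt j < C}"

definition Vtilde :: "nat set \<Rightarrow> (nat \<Rightarrow> real^'q^'p) \<Rightarrow> (nat \<Rightarrow> real) \<Rightarrow> real \<Rightarrow> real
     \<Rightarrow> ((real^'q^'p) \<Rightarrow>\<^sub>L (real^'q^'p)) \<Rightarrow> real^'q^'p \<Rightarrow> real^'q^'p" where
  "Vtilde J X y \<sigma> \<rho> G W =
     (if J = {} then W + \<sigma> *\<^sub>R blinfun_apply G W
      else W + \<sigma> *\<^sub>R blinfun_apply G W
        + \<sigma> *\<^sub>R (\<Sum>j\<in>J. ((y j *\<^sub>R X j) \<bullet> W) *\<^sub>R (y j *\<^sub>R X j))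
        - (\<sigma>\<^sup>2 / (\<sigma> * real (card J) + \<rho>)) *\<^sub>R
            ((\<Sum>j\<in>J. y j * ((y j *\<^sub>R X j) \<bullet> W)) *\<^sub>R (\<Sum>j\<in>J. y j *\<^sub>R (y j *\<^sub>R X j))))"

end

theory Submission
  imports Defs
begin

text \<open>
  For a closed nonempty set \<open>S\<close>, the projection \<open>P = closest_point S\<close> is a subgradient
  selection of the convex function \<open>\<phi> x = \<langle>x, P x\<rangle> - \<parallel>P x\<parallel>\<^sup>2 / 2\<close>. Hence wherever \<open>P\<close> is
  differentiable its derivative \<open>L\<close> behaves like a Hessian of \<open>\<phi>\<close>: it is positive semidefinite
  because \<open>P\<close> is monotone, and it is symmetric because the second difference
  \<open>\<phi> (s + h + k) - \<phi> (s + k) - \<phi> (s + h) + \<phi> s\<close>, which is symmetric in \<open>h\<close> and \<open>k\<close>,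
  is approximated both by \<open>\<langle>h, L k\<rangle>\<close> and by \<open>\<langle>k, L h\<rangle>\<close>. Both properties are preserved
  under limits and convex combinations, so every element \<open>G\<close> of the Clarke Jacobian is
  self-adjoint and positive semidefinite.

  In \<open>\<langle>Vtilde W, W\<rangle>\<close> the negative term is dominated by the third one: with
  \<open>a\<^sub>j = \<langle>y\<^sub>j X\<^sub>j, W\<rangle>\<close>, Cauchy-Schwarz and \<open>y\<^sub>j\<^sup>2 = 1\<close> give
  \<open>(\<Sum>\<^sub>j y\<^sub>j a\<^sub>j)\<^sup>2 \<le> |J| \<Sum>\<^sub>j a\<^sub>j\<^sup>2\<close>, and \<open>\<sigma>\<^sup>2 |J| / (\<sigma> |J| + \<rho>) \<le> \<sigma>\<close>.
  So \<open>\<langle>Vtilde W, W\<rangle> \<ge> \<parallel>W\<parallel>\<^sup>2\<close>.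
\<close>

lemma inner_increment_linearization:
  fixes P :: "'a::real_inner \<Rightarrow> 'a"
  assumes "linear L" "0 \<le> e"
    and approx: "\<And>w. norm w \<le> r \<Longrightarrow> norm (P (s + w) - P s - L w) \<le> e * norm w"
    and "norm x \<le> r" "norm y \<le> r"
  shows "\<bar>u \<bullet> (P (s + y) - P (s + x)) - u \<bullet> L (y - x)\<bar> \<le> 2 * e * r * norm u"
proof -
  define E where "E w = P (s + w) - P s - L w" for w
  have E_le: "norm (E w) \<le> e * r" if "norm w \<le> r" for w
    using approx[OF that] mult_left_mono[OF that \<open>0 \<le> e\<close>] by (simp add: E_def)
  have "u \<bullet> (P (s + y) - P (s + x)) - u \<bullet> L (y - x) = u \<bullet> (E y - E x)"
    by (simp add: E_def linear_diff[OF \<open>linear L\<close>] inner_diff_right)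
  also have "\<bar>\<dots>\<bar> \<le> norm u * norm (E y - E x)"
    by (rule Cauchy_Schwarz_ineq2)
  also have "\<dots> \<le> norm u * (e * r + e * r)"
  proof (rule mult_left_mono)
    show "norm (E y - E x) \<le> e * r + e * r"
      using norm_triangle_ineq4[of "E y" "E x"] E_le[OF assms(5)] E_le[OF assms(4)] by linarith
  qed simp
  finally show ?thesis
    by (simp add: algebra_simps)
qed

locale subgradient_map =
  fixes f :: "'a::real_inner \<Rightarrow> real" and P :: "'a \<Rightarrow> 'a"
  assumes subgradient: "f x + (y - x) \<bullet> P x \<le> f y"
begin

lemma monotone: "0 \<le> (y - x) \<bullet> (P y - P x)"
  using subgradient[of x y] subgradient[of y x] by (simp add: inner_diff algebra_simps)

lemma derivative_nonneg:
  assumes "(P has_derivative L) (at s)"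
  shows "0 \<le> h \<bullet> L h"
proof (rule ccontr)
  assume neg: "\<not> 0 \<le> h \<bullet> L h"
  define g where "g t = h \<bullet> P (s + t *\<^sub>R h)" for t
  have "((\<lambda>t. s + t *\<^sub>R h) has_derivative (\<lambda>t. t *\<^sub>R h)) (at 0)"
    by (auto intro!: derivative_eq_intros)
  moreover have "(P has_derivative L) (at (s + 0 *\<^sub>R h))"
    using assms by simp
  ultimately have "((\<lambda>t. P (s + t *\<^sub>R h)) has_derivative (\<lambda>t. L (t *\<^sub>R h))) (at 0)"
    by (rule has_derivative_compose)
  then have "(g has_derivative (\<lambda>t. h \<bullet> L (t *\<^sub>R h))) (at 0)"
    unfolding g_def by (rule has_derivative_inner_right)
  moreover have "(\<lambda>t. h \<bullet> L (t *\<^sub>R h)) = (*) (h \<bullet> L h)"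
    using linear_scale[OF has_derivative_linear[OF assms]] by (simp add: fun_eq_iff)
  ultimately have "(g has_real_derivative h \<bullet> L h) (at 0)"
    by (simp add: has_field_derivative_def)
  then obtain d where "0 < d" and "\<And>t. 0 < t \<Longrightarrow> t < d \<Longrightarrow> g (0 + t) < g 0"
    using DERIV_neg_dec_right neg by (metis not_le)
  then have "g (d / 2) < g 0"
    by simp
  moreover have "0 \<le> g (d / 2) - g 0"
    using monotone[where x = s and y = "s + (d / 2) *\<^sub>R h"] \<open>0 < d\<close>
    by (simp add: g_def inner_diff_right zero_le_mult_iff)
  ultimately show False
    by simp
qed

lemma mixed_difference_bounds:
  "u \<bullet> P (x + k) - u \<bullet> P (x + u) \<le> f (x + u + k) - f (x + k) - f (x + u) + f x"
  "f (x + u + k) - f (x + k) - f (x + u) + f x \<le> u \<bullet> P (x + u + k) - u \<bullet> P x"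
proof -
  have "f (x + k) + u \<bullet> P (x + k) \<le> f (x + u + k)"
    using subgradient[of "x + k" "x + u + k"] by (simp add: algebra_simps)
  moreover have "f (x + u) - u \<bullet> P (x + u) \<le> f x"
    using subgradient[of "x + u" x] by simp
  moreover have "f (x + u + k) - u \<bullet> P (x + u + k) \<le> f (x + k)"
    using subgradient[of "x + u + k" "x + k"] by (simp add: algebra_simps)
  moreover have "f x + u \<bullet> P x \<le> f (x + u)"
    using subgradient[of x "x + u"] by simp
  ultimately show
    "u \<bullet> P (x + k) - u \<bullet> P (x + u) \<le> f (x + u + k) - f (x + k) - f (x + u) + f x"
    "f (x + u + k) - f (x + k) - f (x + u) + f x \<le> u \<bullet> P (x + u + k) - u \<bullet> P x"
    by linarith+
qed

lemma mixed_difference_cell_estimate: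
  assumes "linear L" "0 \<le> e"
    and approx: "\<And>w. norm w \<le> r \<Longrightarrow> norm (P (s + w) - P s - L w) \<le> e * norm w"
    and "norm w \<le> r" "norm (w + u) \<le> r" "norm (w + k) \<le> r" "norm (w + u + k) \<le> r"
  shows "\<bar>f (s + w + u + k) - f (s + w + k) - f (s + w + u) + f (s + w) - u \<bullet> L k\<bar>
    \<le> \<bar>u \<bullet> L u\<bar> + 2 * e * r * norm u"
proof -
  have upper: "\<bar>u \<bullet> P (s + w + u + k) - u \<bullet> P (s + w) - (u \<bullet> L u + u \<bullet> L k)\<bar>
      \<le> 2 * e * r * norm u"
    using inner_increment_linearization[OF assms(1-3), where x = w and y = "w + u + k" and u = u]
      assms(4-7)
    by (simp add: add.assoc linear_add \<open>linear L\<close> inner_add_right inner_diff_right)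
  have lower: "\<bar>u \<bullet> P (s + w + k) - u \<bullet> P (s + w + u) - (u \<bullet> L k - u \<bullet> L u)\<bar>
      \<le> 2 * e * r * norm u"
    using inner_increment_linearization[OF assms(1-3), where x = "w + u" and y = "w + k" and u = u]
      assms(4-7)
    by (simp add: add.assoc linear_diff \<open>linear L\<close> inner_diff_right)
  have upper_bound: "f (s + w + u + k) - f (s + w + k) - f (s + w + u) + f (s + w) - u \<bullet> L k
      \<le> \<bar>u \<bullet> L u\<bar> + 2 * e * r * norm u"
    using abs_le_D1[OF upper] mixed_difference_bounds(2)[where x = "s + w" and u = u and k = k]
      abs_ge_self[of "u \<bullet> L u"]
    by linarith
  have lower_bound: "- (f (s + w + u + k) - f (s + w + k) - f (s + w + u) + f (s + w) - u \<bullet> L k)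
      \<le> \<bar>u \<bullet> L u\<bar> + 2 * e * r * norm u"
    using abs_le_D2[OF lower] mixed_difference_bounds(1)[where x = "s + w" and u = u and k = k]
      abs_ge_minus_self[of "u \<bullet> L u"]
    by linarith
  from upper_bound lower_bound show ?thesis
    by (rule abs_leI)
qed

text \<open>
  Summing the cell estimate over \<open>m\<close> cells of width \<open>h / m\<close>: the diagonal error
  \<open>\<bar>u \<bullet> L u\<bar>\<close> is quadratic in the cell width, so its total is only \<open>\<bar>h \<bullet> L h\<bar> / m\<close>.
\<close>

lemma mixed_difference_estimate:
  fixes m :: nat
  assumes "linear L" "0 \<le> e"
    and approx: "\<And>w. norm w \<le> r \<Longrightarrow> norm (P (s + w) - P s - L w) \<le> e * norm w"
    and hk: "norm h + norm k \<le> r" and "0 < m"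
  shows "\<bar>f (s + h + k) - f (s + k) - f (s + h) + f s - h \<bullet> L k\<bar>
    \<le> \<bar>h \<bullet> L h\<bar> / m + 2 * e * r * norm h"
proof -
  define u where "u = h /\<^sub>R real m"
  define a where "a i = s + real i *\<^sub>R u" for i
  define c where "c i = f (a i + u + k) - f (a i + k) - f (a i + u) + f (a i)" for i
  have m_u: "real m *\<^sub>R u = h"
    using \<open>0 < m\<close> by (simp add: u_def)
  have a_Suc: "a (Suc i) = a i + u" for i
    by (simp add: a_def algebra_simps)
  have norm_iu: "norm (real i *\<^sub>R u) \<le> norm h" if "i \<le> m" for i
  proof -
    have "norm (real i *\<^sub>R u) = (real i / real m) * norm h"
      by (simp add: u_def field_simps)
    also have "\<dots> \<le> norm h"
      using that \<open>0 < m\<close> by (intro mult_left_le_one_le) auto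
    finally show ?thesis .
  qed
  have cell: "\<bar>c i - u \<bullet> L k\<bar> \<le> \<bar>u \<bullet> L u\<bar> + 2 * e * r * norm u" if "i < m" for i
  proof -
    have i_u: "norm (real i *\<^sub>R u) \<le> norm h" and Suc_i_u: "norm (real i *\<^sub>R u + u) \<le> norm h"
      using norm_iu[of i] norm_iu[of "Suc i"] that by (simp_all add: algebra_simps)
    then have "norm (real i *\<^sub>R u + k) \<le> r" "norm (real i *\<^sub>R u + u + k) \<le> r"
      using hk norm_triangle_ineq[of "real i *\<^sub>R u" k] norm_triangle_ineq[of "real i *\<^sub>R u + u" k]
      by linarith+
    moreover have "norm h \<le> r"
      using hk norm_ge_zero[of k] by linarith
    ultimately show ?thesis
      using i_u Suc_i_u
      unfolding c_def a_def by (intro mixed_difference_cell_estimate[OF assms(1-3)]) auto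
  qed
  have "(\<Sum>i<m. c i) = (\<Sum>i<m. (f (a (Suc i) + k) - f (a (Suc i))) - (f (a i + k) - f (a i)))"
    by (simp add: c_def a_Suc algebra_simps)
  also have "\<dots> = (f (a m + k) - f (a m)) - (f (a 0 + k) - f (a 0))"
    by (rule sum_lessThan_telescope)
  also have "\<dots> = f (s + h + k) - f (s + k) - f (s + h) + f s"
    by (simp add: a_def m_u)
  finally have telescope: "(\<Sum>i<m. c i) = f (s + h + k) - f (s + k) - f (s + h) + f s" .
  have "h \<bullet> L k = real m * (u \<bullet> L k)" "h \<bullet> L h = real m ^ 2 * (u \<bullet> L u)"
    "norm h = real m * norm u"
    unfolding m_u[symmetric] using \<open>linear L\<close> by (simp_all add: linear_scale power2_eq_square)
  then have "\<bar>(\<Sum>i<m. c i) - h \<bullet> L k\<bar> = \<bar>\<Sum>i<m. c i - u \<bullet> L k\<bar>"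
    by (simp add: sum_subtractf)
  also have "\<dots> \<le> (\<Sum>i<m. \<bar>c i - u \<bullet> L k\<bar>)"
    by (rule sum_abs)
  also have "\<dots> \<le> (\<Sum>i<m. \<bar>u \<bullet> L u\<bar> + 2 * e * r * norm u)"
    by (rule sum_mono) (simp add: cell)
  also have "\<dots> = \<bar>h \<bullet> L h\<bar> / m + 2 * e * r * norm h"
    using \<open>h \<bullet> L h = _\<close> \<open>norm h = _\<close> \<open>0 < m\<close> by (simp add: abs_mult power2_eq_square field_simps)
  finally show ?thesis
    by (simp add: telescope)
qed

lemma derivative_asymmetry_le:
  fixes m :: nat
  assumes deriv: "(P has_derivative L) (at s)" and "0 < e" "0 < m"
  shows "\<bar>h \<bullet> L k - k \<bullet> L h\<bar>
    \<le> (\<bar>h \<bullet> L h\<bar> + \<bar>k \<bullet> L k\<bar>) / m + 2 * e * (norm h + norm k)\<^sup>2"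
proof -
  have "linear L"
    using deriv by (rule has_derivative_linear)
  obtain d where "0 < d"
    and d: "\<And>y. norm (y - s) < d \<Longrightarrow> norm (P y - P s - L (y - s)) \<le> e * norm (y - s)"
    using deriv \<open>0 < e\<close> unfolding has_derivative_at_alt by blast
  define N where "N = norm h + norm k"
  define t where "t = d / 2 / (N + 1)"
  have "0 < N + 1"
    by (simp add: N_def add_nonneg_pos)
  then have "0 < t"
    using \<open>0 < d\<close> by (simp add: t_def)
  have "t * N \<le> t * (N + 1)"
    using \<open>0 < t\<close> by simp
  also have "\<dots> = d / 2"
    using \<open>0 < N + 1\<close> by (simp add: t_def field_simps)
  also have "\<dots> < d"
    using \<open>0 < d\<close> by simp
  finally have approx: "norm (P (s + w) - P s - L w) \<le> e * norm w" if "norm w \<le> t * N" for w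
    using d[of "s + w"] that by simp
  have scale: "(t *\<^sub>R a) \<bullet> L (t *\<^sub>R b) = t\<^sup>2 * (a \<bullet> L b)" for a b
    using \<open>linear L\<close> by (simp add: linear_scale power2_eq_square)
  define D where "D = f (s + t *\<^sub>R h + t *\<^sub>R k) - f (s + t *\<^sub>R k) - f (s + t *\<^sub>R h) + f s"
  have "\<bar>D - (t *\<^sub>R h) \<bullet> L (t *\<^sub>R k)\<bar>
      \<le> \<bar>(t *\<^sub>R h) \<bullet> L (t *\<^sub>R h)\<bar> / m + 2 * e * (t * N) * norm (t *\<^sub>R h)"
    unfolding D_def using \<open>0 < e\<close> \<open>0 < t\<close> \<open>0 < m\<close>
    by (intro mixed_difference_estimate[OF \<open>linear L\<close> _ approx]) (auto simp: N_def algebra_simps)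
  then have hk: "\<bar>D - t\<^sup>2 * (h \<bullet> L k)\<bar> \<le> t\<^sup>2 * (\<bar>h \<bullet> L h\<bar> / m + 2 * e * N * norm h)"
    unfolding scale using \<open>0 < t\<close> by (simp add: abs_mult power2_eq_square algebra_simps)
  have D_swap: "D = f (s + t *\<^sub>R k + t *\<^sub>R h) - f (s + t *\<^sub>R h) - f (s + t *\<^sub>R k) + f s"
    by (simp add: D_def algebra_simps)
  have "\<bar>D - (t *\<^sub>R k) \<bullet> L (t *\<^sub>R h)\<bar>
      \<le> \<bar>(t *\<^sub>R k) \<bullet> L (t *\<^sub>R k)\<bar> / m + 2 * e * (t * N) * norm (t *\<^sub>R k)"
    unfolding D_swap using \<open>0 < e\<close> \<open>0 < t\<close> \<open>0 < m\<close>
    by (intro mixed_difference_estimate[OF \<open>linear L\<close> _ approx]) (auto simp: N_def algebra_simps)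
  then have kh: "\<bar>D - t\<^sup>2 * (k \<bullet> L h)\<bar> \<le> t\<^sup>2 * (\<bar>k \<bullet> L k\<bar> / m + 2 * e * N * norm k)"
    unfolding scale using \<open>0 < t\<close> by (simp add: abs_mult power2_eq_square algebra_simps)
  have "t\<^sup>2 * \<bar>h \<bullet> L k - k \<bullet> L h\<bar> = \<bar>t\<^sup>2 * (h \<bullet> L k - k \<bullet> L h)\<bar>"
    by (simp add: abs_mult)
  also have "\<dots> = \<bar>(D - t\<^sup>2 * (k \<bullet> L h)) - (D - t\<^sup>2 * (h \<bullet> L k))\<bar>"
    by (simp add: algebra_simps)
  also have "\<dots> \<le> t\<^sup>2 * (\<bar>k \<bullet> L k\<bar> / m + 2 * e * N * norm k)
      + t\<^sup>2 * (\<bar>h \<bullet> L h\<bar> / m + 2 * e * N * norm h)"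
    by (rule order_trans[OF abs_triangle_ineq4 add_mono[OF kh hk]])
  also have "\<dots> = t\<^sup>2 * ((\<bar>h \<bullet> L h\<bar> + \<bar>k \<bullet> L k\<bar>) / m + 2 * e * N\<^sup>2)"
    by (simp add: N_def power2_eq_square add_divide_distrib algebra_simps)
  finally show ?thesis
    using \<open>0 < t\<close> by (simp add: N_def)
qed

lemma derivative_symmetric:
  assumes "(P has_derivative L) (at s)"
  shows "h \<bullet> L k = k \<bullet> L h"
proof -
  define c where "c = \<bar>h \<bullet> L h\<bar> + \<bar>k \<bullet> L k\<bar> + 2 * (norm h + norm k)\<^sup>2"
  have "\<bar>h \<bullet> L k - k \<bullet> L h\<bar> \<le> c / real m" if "1 \<le> m" for m
    using derivative_asymmetry_le[OF assms, of "1 / real m" m h k] that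
    by (simp add: c_def add_divide_distrib)
  then have "\<bar>h \<bullet> L k - k \<bullet> L h\<bar> \<le> 0"
    by (intro LIMSEQ_le_const[OF lim_const_over_n]) blast
  then show ?thesis
    by simp
qed

end

text \<open>
  \<open>proj_potential S x\<close> is the maximum of \<open>x \<bullet> p - p \<bullet> p / 2\<close> over \<open>p \<in> S\<close>, attained at the
  closest point.
\<close>

definition proj_potential :: "'a::euclidean_space set \<Rightarrow> 'a \<Rightarrow> real" where
  "proj_potential S x = x \<bullet> closest_point S x - closest_point S x \<bullet> closest_point S x / 2"

lemma closest_point_subgradient:
  fixes S :: "'a::euclidean_space set"
  assumes "closed S" "S \<noteq> {}"
  shows "proj_potential S x + (y - x) \<bullet> closest_point S x \<le> proj_potential S y"
proof -
  let ?P = "closest_point S"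
  have "dist y (?P y) \<le> dist y (?P x)"
    by (rule closest_point_le[OF assms(1) closest_point_in_set[OF assms]])
  then have "(y - ?P y) \<bullet> (y - ?P y) \<le> (y - ?P x) \<bullet> (y - ?P x)"
    by (simp add: dist_norm power_mono flip: power2_norm_eq_inner)
  moreover have "proj_potential S y - (proj_potential S x + (y - x) \<bullet> ?P x)
      = ((y - ?P x) \<bullet> (y - ?P x) - (y - ?P y) \<bullet> (y - ?P y)) / 2"
    unfolding proj_potential_def by (simp add: inner_diff inner_commute field_simps)
  ultimately have "0 \<le> proj_potential S y - (proj_potential S x + (y - x) \<bullet> ?P x)"
    by simp
  then show ?thesis
    by simp
qed

definition nonneg_selfadjoint :: "('a::real_inner \<Rightarrow>\<^sub>L 'a) set" where
  "nonneg_selfadjoint =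
    {L. (\<forall>U W. blinfun_apply L U \<bullet> W = U \<bullet> blinfun_apply L W) \<and> (\<forall>W. 0 \<le> blinfun_apply L W \<bullet> W)}"

lemma convex_nonneg_selfadjoint: "convex nonneg_selfadjoint"
  unfolding convex_def nonneg_selfadjoint_def
  by (auto simp: blinfun.add_left blinfun.scaleR_left inner_add_left inner_add_right)

lemma closed_nonneg_selfadjoint: "closed (nonneg_selfadjoint :: ('a::real_inner \<Rightarrow>\<^sub>L 'a) set)"
proof -
  have "nonneg_selfadjoint =
      (\<Inter>U. \<Inter>W. {L :: 'a \<Rightarrow>\<^sub>L 'a. blinfun_apply L U \<bullet> W = U \<bullet> blinfun_apply L W})
      \<inter> (\<Inter>W. {L. 0 \<le> blinfun_apply L W \<bullet> W})"
    by (auto simp: nonneg_selfadjoint_def)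
  also have "closed \<dots>"
    by (intro closed_Int closed_INT closed_Collect_eq closed_Collect_le continuous_intros ballI)
  finally show ?thesis .
qed

lemma B_jac_closest_point_subset:
  fixes S :: "'a::euclidean_space set"
  assumes "closed S" "S \<noteq> {}"
  shows "B_jac (closest_point S) x \<subseteq> nonneg_selfadjoint"
proof
  fix L
  assume "L \<in> B_jac (closest_point S) x"
  then obtain s D where der: "\<And>k. (closest_point S has_derivative blinfun_apply (D k)) (at (s k))"
    and "D \<longlonglongrightarrow> L"
    unfolding B_jac_def by blast
  interpret subgradient_map "proj_potential S" "closest_point S"
    by unfold_locales (rule closest_point_subgradient[OF assms])
  have "D k \<in> nonneg_selfadjoint" for k
    using derivative_symmetric[OF der] derivative_nonneg[OF der]
    by (auto simp: nonneg_selfadjoint_def inner_commute)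
  with \<open>D \<longlonglongrightarrow> L\<close> show "L \<in> nonneg_selfadjoint"
    using closed_nonneg_selfadjoint closed_sequentially by blast
qed

lemma clarke_jac_closest_point_subset:
  fixes S :: "'a::euclidean_space set"
  assumes "closed S" "S \<noteq> {}"
  shows "clarke_jac (closest_point S) x \<subseteq> nonneg_selfadjoint"
  unfolding clarke_jac_def
  by (rule hull_minimal[where S = convex,
        OF B_jac_closest_point_subset[OF assms] convex_nonneg_selfadjoint])

lemma spec_ball_eq: "spec_ball \<tau> = {X :: real^'q^'p. \<forall>v. norm (X *v v) \<le> \<tau> * norm v}"
proof -
  have "onorm (\<lambda>v. X *v v) \<le> \<tau> \<longleftrightarrow> (\<forall>v. norm (X *v v) \<le> \<tau> * norm v)" for X :: "real^'q^'p"
    using onorm[OF matrix_vector_mul_bounded_linear, of X] onorm_le[of "\<lambda>v. X *v v" \<tau>]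
    by (meson mult_right_mono norm_ge_zero order_trans)
  then show ?thesis
    by (auto simp: spec_ball_def spec_norm_def)
qed

lemma continuous_on_matrix_vector_mult_left: "continuous_on S (\<lambda>A :: real^'n^'m. A *v v)"
proof -
  have "linear (\<lambda>A :: real^'n^'m. A *v v)"
    by (rule linearI) (simp_all add: matrix_vector_mult_add_rdistrib flip: scaleR_matrix_vector_assoc)
  then show ?thesis
    by (simp add: linear_continuous_on linear_conv_bounded_linear)
qed

lemma closed_spec_ball: "closed (spec_ball \<tau> :: (real^'q^'p) set)"
  unfolding spec_ball_eq Collect_all_eq
  by (intro closed_INT closed_Collect_le continuous_intros continuous_on_matrix_vector_mult_left ballI)

lemma spec_ball_nonempty:
  assumes "0 \<le> \<tau>"
  shows "spec_ball \<tau> \<noteq> {}"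
proof -
  have "0 \<in> spec_ball \<tau>"
    using assms by (simp add: spec_ball_eq)
  then show ?thesis
    by blast
qed

lemma inner_Vtilde:
  "Vtilde J X y \<sigma> \<rho> G U \<bullet> W = U \<bullet> W + \<sigma> * (blinfun_apply G U \<bullet> W)
     + \<sigma> * (\<Sum>j\<in>J. ((y j *\<^sub>R X j) \<bullet> U) * ((y j *\<^sub>R X j) \<bullet> W))
     - \<sigma>\<^sup>2 / (\<sigma> * real (card J) + \<rho>)
       * ((\<Sum>j\<in>J. y j * ((y j *\<^sub>R X j) \<bullet> U)) * (\<Sum>j\<in>J. y j * ((y j *\<^sub>R X j) \<bullet> W)))"
  by (cases "J = {}") (simp_all add: Vtilde_def inner_add_left inner_diff_left inner_sum_left mult.assoc)

lemma Vtilde_selfadjoint: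
  assumes "G \<in> nonneg_selfadjoint"
  shows "Vtilde J X y \<sigma> \<rho> G U \<bullet> W = U \<bullet> Vtilde J X y \<sigma> \<rho> G W"
  using assms
  by (simp add: inner_Vtilde inner_commute[of U] nonneg_selfadjoint_def mult.commute)

lemma inner_Vtilde_self_pos:
  assumes "finite J" "\<And>j. j \<in> J \<Longrightarrow> (y j)\<^sup>2 = 1" "0 < \<sigma>" "0 \<le> \<rho>"
    and "G \<in> nonneg_selfadjoint" "W \<noteq> 0"
  shows "0 < Vtilde J X y \<sigma> \<rho> G W \<bullet> W"
proof -
  define a where "a j = (y j *\<^sub>R X j) \<bullet> W" for j
  define c where "c = real (card J)"
  define \<kappa> where "\<kappa> = \<sigma>\<^sup>2 / (\<sigma> * c + \<rho>)"
  have "0 \<le> c"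
    by (simp add: c_def)
  then have "0 \<le> \<sigma> * c + \<rho>"
    using \<open>0 < \<sigma>\<close> \<open>0 \<le> \<rho>\<close> by simp
  then have "0 \<le> \<kappa>"
    by (simp add: \<kappa>_def)
  have "\<kappa> * c \<le> \<sigma>"
  proof (cases "\<sigma> * c + \<rho> = 0")
    case True
    then show ?thesis
      using \<open>0 < \<sigma>\<close> by (simp add: \<kappa>_def)
  next
    case False
    with \<open>0 \<le> \<sigma> * c + \<rho>\<close> have "0 < \<sigma> * c + \<rho>"
      by simp
    moreover have "0 \<le> \<sigma> * \<rho>"
      using \<open>0 < \<sigma>\<close> \<open>0 \<le> \<rho>\<close> by simp
    ultimately show ?thesis
      by (simp add: \<kappa>_def power2_eq_square pos_divide_le_eq algebra_simps)
  qed
  have "(\<Sum>j\<in>J. y j * a j)\<^sup>2 \<le> (\<Sum>j\<in>J. (y j)\<^sup>2) * (\<Sum>j\<in>J. (a j)\<^sup>2)"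
    by (rule Cauchy_Schwarz_ineq_sum)
  also have "\<dots> = c * (\<Sum>j\<in>J. (a j)\<^sup>2)"
    using assms(2) by (simp add: c_def)
  finally have "\<kappa> * (\<Sum>j\<in>J. y j * a j)\<^sup>2 \<le> (\<kappa> * c) * (\<Sum>j\<in>J. (a j)\<^sup>2)"
    using \<open>0 \<le> \<kappa>\<close> by (simp add: mult_left_mono mult.assoc)
  also have "\<dots> \<le> \<sigma> * (\<Sum>j\<in>J. (a j)\<^sup>2)"
    using \<open>\<kappa> * c \<le> \<sigma>\<close> by (intro mult_right_mono sum_nonneg) auto
  finally have quadratic_le: "\<kappa> * (\<Sum>j\<in>J. y j * a j)\<^sup>2 \<le> \<sigma> * (\<Sum>j\<in>J. (a j)\<^sup>2)" .
  have "0 \<le> blinfun_apply G W \<bullet> W"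
    using assms(5) unfolding nonneg_selfadjoint_def by blast
  then have "0 \<le> \<sigma> * (blinfun_apply G W \<bullet> W)"
    using \<open>0 < \<sigma>\<close> by simp
  moreover have "0 < W \<bullet> W"
    using \<open>W \<noteq> 0\<close> by simp
  moreover have "Vtilde J X y \<sigma> \<rho> G W \<bullet> W
      = W \<bullet> W + \<sigma> * (blinfun_apply G W \<bullet> W) + \<sigma> * (\<Sum>j\<in>J. (a j)\<^sup>2) - \<kappa> * (\<Sum>j\<in>J. y j * a j)\<^sup>2"
    by (simp add: inner_Vtilde a_def c_def \<kappa>_def power2_eq_square)
  ultimately show ?thesis
    using quadratic_le by linarith
qed

theorem proposition3:
  fixes n :: nat and X :: "nat \<Rightarrow> real^'q^'p" and y :: "nat \<Rightarrow> real"
    and C \<tau> \<sigma> \<rho> bt :: real and lam :: "nat \<Rightarrow> real"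
    and Lam Wt :: "real^'q^'p" and G :: "(real^'q^'p) \<Rightarrow>\<^sub>L (real^'q^'p)"
  assumes "\<forall>i<n. y i = -1 \<or> y i = 1"
    and "C > 0" and "\<tau> > 0" and "\<sigma> > 0" and "\<rho> \<ge> 0"
    and "G \<in> clarke_jac (proj_spec_ball \<tau>) (Lam + \<sigma> *\<^sub>R Wt)"
  shows "(\<forall>U W. Vtilde (J1_set n X y C lam \<sigma> Wt bt) X y \<sigma> \<rho> G U \<bullet> W
               = U \<bullet> Vtilde (J1_set n X y C lam \<sigma> Wt bt) X y \<sigma> \<rho> G W)
       \<and> (\<forall>W. W \<noteq> 0 \<longrightarrow> Vtilde (J1_set n X y C lam \<sigma> Wt bt) X y \<sigma> \<rho> G W \<bullet> W > 0)"
proof -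
  let ?J = "J1_set n X y C lam \<sigma> Wt bt"
  have "G \<in> clarke_jac (closest_point (spec_ball \<tau>)) (Lam + \<sigma> *\<^sub>R Wt)"
    using assms(6) by (simp add: proj_spec_ball_def[abs_def])
  moreover have "0 \<le> \<tau>"
    using assms(3) by simp
  ultimately have "G \<in> nonneg_selfadjoint"
    using clarke_jac_closest_point_subset[OF closed_spec_ball spec_ball_nonempty] by blast
  moreover have "?J \<subseteq> {..<n}"
    by (auto simp: J1_set_def)
  then have "finite ?J" "\<And>j. j \<in> ?J \<Longrightarrow> (y j)\<^sup>2 = 1"
    using assms(1) finite_subset by auto
  ultimately show ?thesis
    using Vtilde_selfadjoint inner_Vtilde_self_pos assms(4,5) by blast
qed

end
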